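(* Let $\mu$ be a PTP-monotone. If $A\in H_n$ and $B\in H_k$ satisfy $\|A_+\|_1=\|B_+\|_1$ and $\|A_-\|_1=\|B_-\|_1$, then $\mu(A)=\mu(B)$; i.e. $\mu(A)$ is a function of $(\|A_+\|_1,\|A_-\|_1)$.
   Context: $H_n$ denotes the $n\times n$ complex Hermitian matrices. A linear map $\Phi:H_n\to H_k$ is PTP if it maps positive semidefinite matrices to positive semidefinite matrices and $\operatorname{tr}\Phi(X)=\operatorname{tr}X$ for all $X$. A function $\mu:\bigcup_{n\in\mathbb N}H_n\to\mathbb R$ is a PTP-monotone if $\mu(\Phi(A))\leq\mu(A)$ for all $n,k$, all PTP maps $\Phi:H_n\to H_k$ and all $A\in H_n$. Every $A$ decomposes uniquely as $A=A_+-A_-$ with $A_\pm$ positive semidefinite and $A_+A_-=0$. $\|\cdot\|_1$ is the trace norm. *)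

theory Defs
  imports "Jordan_Normal_Form.Schur_Decomposition" "Jordan_Normal_Form.Char_Poly"
begin

text \<open>Matrices of varying size are modelled by the type complex mat of
  Jordan_Normal_Form; H_n is the set of n x n Hermitian complex matrices.\<close>

definition hermitian_mat :: "nat \<Rightarrow> complex mat \<Rightarrow> bool" where
  "hermitian_mat n A \<longleftrightarrow> A \<in> carrier_mat n n \<and> mat_adjoint A = A"

definition mtrace :: "complex mat \<Rightarrow> complex" where
  "mtrace A = (\<Sum>i<dim_row A. A $$ (i, i))"

definition psd_mat :: "nat \<Rightarrow> complex mat \<Rightarrow> bool" where
  "psd_mat n A \<longleftrightarrow> hermitian_mat n A \<and>
     (\<forall>v \<in> carrier_vec n. Re ((A *\<^sub>v v) \<bullet>c v) \<ge> 0)"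

definition ptp_map :: "nat \<Rightarrow> nat \<Rightarrow> (complex mat \<Rightarrow> complex mat) \<Rightarrow> bool" where
  "ptp_map n k \<Phi> \<longleftrightarrow>
     (\<forall>X. hermitian_mat n X \<longrightarrow> hermitian_mat k (\<Phi> X)) \<and>
     (\<forall>X Y (a::real) (b::real). hermitian_mat n X \<longrightarrow> hermitian_mat n Y \<longrightarrow>
        \<Phi> (complex_of_real a \<cdot>\<^sub>m X + complex_of_real b \<cdot>\<^sub>m Y)
          = complex_of_real a \<cdot>\<^sub>m \<Phi> X + complex_of_real b \<cdot>\<^sub>m \<Phi> Y) \<and>
     (\<forall>X. psd_mat n X \<longrightarrow> psd_mat k (\<Phi> X)) \<and>
     (\<forall>X. hermitian_mat n X \<longrightarrow> mtrace (\<Phi> X) = mtrace X)"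

definition ptp_monotone :: "(complex mat \<Rightarrow> real) \<Rightarrow> bool" where
  "ptp_monotone \<mu> \<longleftrightarrow>
     (\<forall>n k \<Phi> A. 0 < n \<longrightarrow> 0 < k \<longrightarrow> ptp_map n k \<Phi> \<longrightarrow> hermitian_mat n A \<longrightarrow>
        \<mu> (\<Phi> A) \<le> \<mu> A)"

definition jordan_parts :: "complex mat \<Rightarrow> complex mat \<times> complex mat" where
  "jordan_parts A = (THE (P, N). psd_mat (dim_row A) P \<and> psd_mat (dim_row A) N \<and>
       A = P - N \<and> P * N = 0\<^sub>m (dim_row A) (dim_row A))"

definition pos_part :: "complex mat \<Rightarrow> complex mat" where
  "pos_part A = fst (jordan_parts A)"

definition neg_part :: "complex mat \<Rightarrow> complex mat" where
  "neg_part A = snd (jordan_parts A)"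

text \<open>Trace norm: sum of singular values, i.e. of square roots of the eigenvalues
  (with algebraic multiplicity) of X* X.\<close>
definition trace_norm :: "complex mat \<Rightarrow> real" where
  "trace_norm X = (let p = char_poly (mat_adjoint X * X) in
     \<Sum>z \<in> {z. poly p z = 0}. real (order z p) * sqrt (Re z))"

end

theory Submission
  imports Defs "Jordan_Normal_Form.Spectral_Radius"
begin

text \<open>Diagonalize A = U diag(d) U^*. Then A_+ = U diag(max d 0) U^* and A_- = U diag(max (-d) 0) U^*,
  with trace norms a = sum of max d_i 0 and b = sum of max (-d_i) 0. The pinching that sends X to
  diag(trace of X compressed to the eigenvectors with d_i > 0, trace of X compressed to the others)
  is PTP and maps A to diag(a, -b). Conversely, with probability vectors p, q proportional to
  max d 0 and max (-d) 0, the map diag(y_0, y_1) \<mapsto> U diag(y_0 p + y_1 q) U^* is PTP and maps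
  diag(a, -b) back to A. Monotonicity along both maps gives \<mu> A = \<mu> (diag(a, -b)).\<close>

section \<open>Adjoints, quadratic forms and unitary matrices\<close>

lemma index_mult_mat_sum:
  assumes "A \<in> carrier_mat n m" "B \<in> carrier_mat m p" "i < n" "j < p"
  shows "(A * B) $$ (i,j) = (\<Sum>k<m. A $$ (i,k) * B $$ (k,j))"
  using assms by (simp add: scalar_prod_def atLeast0LessThan)

lemma mult_carrier_mat_square[simp]:
  "A \<in> carrier_mat n n \<Longrightarrow> B \<in> carrier_mat n n \<Longrightarrow> A * B \<in> carrier_mat n n"
  by (rule mult_carrier_mat)

lemma carrier_mat_adjoint[simp]: "A \<in> carrier_mat n m \<Longrightarrow> mat_adjoint A \<in> carrier_mat m n"
  unfolding mat_adjoint_def by (auto simp: mat_of_rows_def)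

lemma dim_mat_adjoint[simp]:
  "dim_row (mat_adjoint A) = dim_col A" "dim_col (mat_adjoint A) = dim_row A"
  unfolding mat_adjoint_def by (auto simp: mat_of_rows_def)

lemma index_mat_adjoint[simp]:
  "i < dim_col A \<Longrightarrow> j < dim_row A \<Longrightarrow> mat_adjoint A $$ (i,j) = cnj (A $$ (j,i))"
  unfolding mat_adjoint_def by (simp add: mat_of_rows_index)

lemma mat_adjoint_adjoint[simp]: "mat_adjoint (mat_adjoint (A::complex mat)) = A"
  by (rule eq_matI, auto)

lemma mat_adjoint_one[simp]: "mat_adjoint (1\<^sub>m n :: complex mat) = 1\<^sub>m n"
  by (rule eq_matI, auto)

lemma mat_adjoint_zero[simp]: "mat_adjoint (0\<^sub>m n m :: complex mat) = 0\<^sub>m m n"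
  by (rule eq_matI, auto)

lemma mat_adjoint_mult:
  assumes "A \<in> carrier_mat n m" "B \<in> carrier_mat m p"
  shows "mat_adjoint (A * B) = mat_adjoint B * mat_adjoint (A::complex mat)"
proof (rule eq_matI)
  fix i j assume "i < dim_row (mat_adjoint B * mat_adjoint A)" "j < dim_col (mat_adjoint B * mat_adjoint A)"
  then have ij: "i < p" "j < n" using assms by auto
  have "mat_adjoint (A * B) $$ (i, j) = cnj (\<Sum>k<m. A $$ (j,k) * B $$ (k,i))"
    using index_mult_mat_sum[OF assms ij(2) ij(1)] assms ij by simp
  also have "\<dots> = (\<Sum>k<m. mat_adjoint B $$ (i,k) * mat_adjoint A $$ (k,j))"
    using assms ij by (simp add: mult.commute)
  also have "\<dots> = (mat_adjoint B * mat_adjoint A) $$ (i, j)"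
    using index_mult_mat_sum[of "mat_adjoint B" p m "mat_adjoint A" n i j] assms ij by simp
  finally show "mat_adjoint (A * B) $$ (i, j) = (mat_adjoint B * mat_adjoint A) $$ (i, j)" .
qed (use assms in auto)

lemma cscalar_prod_mat_adjoint:
  fixes X :: "complex mat"
  assumes X: "X \<in> carrier_mat n m" and x: "x \<in> carrier_vec m" and y: "y \<in> carrier_vec n"
  shows "(X *\<^sub>v x) \<bullet>c y = x \<bullet>c (mat_adjoint X *\<^sub>v y)"
proof -
  have "(X *\<^sub>v x) \<bullet>c y = (\<Sum>i<n. (\<Sum>k<m. X $$ (i,k) * x $ k) * cnj (y $ i))"
    using X x y by (simp add: scalar_prod_def atLeast0LessThan)
  also have "\<dots> = (\<Sum>i<n. \<Sum>k<m. x $ k * (X $$ (i,k) * cnj (y $ i)))"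
    by (simp add: sum_distrib_left sum_distrib_right algebra_simps)
  also have "\<dots> = (\<Sum>k<m. \<Sum>i<n. x $ k * (X $$ (i,k) * cnj (y $ i)))"
    by (rule sum.swap)
  also have "\<dots> = x \<bullet>c (mat_adjoint X *\<^sub>v y)"
    using X x y by (simp add: scalar_prod_def atLeast0LessThan sum_distrib_left)
  finally show ?thesis .
qed

lemma cscalar_prod_swap:
  assumes "v \<in> carrier_vec n" "w \<in> carrier_vec n"
  shows "v \<bullet>c w = cnj (w \<bullet>c (v::complex vec))"
  using assms by (simp add: scalar_prod_def cnj_sum mult.commute)

lemma cscalar_prod_smult:
  assumes "x \<in> carrier_vec n" "y \<in> carrier_vec n"
  shows "(a \<cdot>\<^sub>v x) \<bullet>c (b \<cdot>\<^sub>v y) = a * cnj b * (x \<bullet>c (y::complex vec))"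
  using assms by (simp add: scalar_prod_def sum_distrib_left algebra_simps)

lemma cscalar_prod_smult_left:
  assumes "x \<in> carrier_vec n" "y \<in> carrier_vec n"
  shows "(a \<cdot>\<^sub>v x) \<bullet>c y = a * (x \<bullet>c (y::complex vec))"
  using assms by (simp add: scalar_prod_def sum_distrib_left algebra_simps)

lemma cscalar_prod_self_real_pos:
  assumes "x \<in> carrier_vec n" "x \<noteq> 0\<^sub>v n"
  shows "x \<bullet>c x = complex_of_real (Re (x \<bullet>c x)) \<and> Re (x \<bullet>c (x::complex vec)) > 0"
proof -
  have "x \<bullet>c x > 0" using assms by simp
  then show ?thesis by (simp add: less_complex_def complex_eq_iff)
qed

lemma cscalar_prod_self_nonpos_imp_zero:
  assumes x: "x \<in> carrier_vec n" and r: "Re (x \<bullet>c x) \<le> 0"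
  shows "x = 0\<^sub>v n"
proof -
  have "x \<bullet>c x \<ge> 0" by (rule conjugate_square_ge_0_vec)
  then have "Im (x \<bullet>c x) = 0" "Re (x \<bullet>c x) \<ge> 0" by (auto simp: less_eq_complex_def)
  with r have "x \<bullet>c x = 0" by (simp add: complex_eq_iff)
  then show ?thesis using x by simp
qed

lemma hermitian_mat_iff:
  "hermitian_mat n A \<longleftrightarrow> A \<in> carrier_mat n n \<and> (\<forall>i<n. \<forall>j<n. A $$ (i,j) = cnj (A $$ (j,i)))"
proof
  assume "hermitian_mat n A"
  then have A: "A \<in> carrier_mat n n" and e: "mat_adjoint A = A"
    unfolding hermitian_mat_def by auto
  have "A $$ (i,j) = cnj (A $$ (j,i))" if "i < n" "j < n" for i j
    using index_mat_adjoint[of i A j] that A e by simp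
  with A show "A \<in> carrier_mat n n \<and> (\<forall>i<n. \<forall>j<n. A $$ (i,j) = cnj (A $$ (j,i)))" by blast
next
  assume h: "A \<in> carrier_mat n n \<and> (\<forall>i<n. \<forall>j<n. A $$ (i,j) = cnj (A $$ (j,i)))"
  then have A: "A \<in> carrier_mat n n"
    and h2: "\<And>i j. i < n \<Longrightarrow> j < n \<Longrightarrow> A $$ (i,j) = cnj (A $$ (j,i))" by blast+
  have "mat_adjoint A = A"
  proof (rule eq_matI)
    fix i j assume "i < dim_row A" "j < dim_col A"
    then show "mat_adjoint A $$ (i, j) = A $$ (i, j)" using A h2[of i j] by simp
  qed (use A in auto)
  with A show "hermitian_mat n A" unfolding hermitian_mat_def by blast
qed

definition quad_form :: "complex mat \<Rightarrow> complex vec \<Rightarrow> complex" where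
  "quad_form X v = (X *\<^sub>v v) \<bullet>c v"

lemma psd_mat_iff: "psd_mat n A \<longleftrightarrow> hermitian_mat n A \<and> (\<forall>v\<in>carrier_vec n. Re (quad_form A v) \<ge> 0)"
  unfolding psd_mat_def quad_form_def by simp

lemma psd_matD: "psd_mat n P \<Longrightarrow> P \<in> carrier_mat n n \<and> mat_adjoint P = P"
  unfolding psd_mat_def hermitian_mat_def by auto

lemma quad_form_sum:
  assumes "X \<in> carrier_mat n n" "v \<in> carrier_vec n"
  shows "quad_form X v = (\<Sum>i<n. \<Sum>j<n. X $$ (i,j) * v $ j * cnj (v $ i))"
  using assms unfolding quad_form_def
  by (simp add: scalar_prod_def atLeast0LessThan sum_distrib_right)

lemma Im_quad_form_hermitian:
  assumes X: "hermitian_mat n X" and v: "v \<in> carrier_vec n"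
  shows "Im (quad_form X v) = 0"
proof -
  have Xc: "X \<in> carrier_mat n n" and Xa: "mat_adjoint X = X"
    using X unfolding hermitian_mat_def by auto
  have "quad_form X v = v \<bullet>c (X *\<^sub>v v)"
    unfolding quad_form_def using cscalar_prod_mat_adjoint[OF Xc v v] Xa by simp
  also have "\<dots> = cnj (quad_form X v)"
    unfolding quad_form_def using Xc v by (intro cscalar_prod_swap[of _ n]) auto
  finally have "Im (quad_form X v) = Im (cnj (quad_form X v))" by simp
  then show ?thesis by simp
qed

lemma quad_form_unit_vec:
  assumes "Y \<in> carrier_mat n n" "j < n"
  shows "quad_form Y (unit_vec n j) = Y $$ (j,j)"
proof -
  have "conjugate (unit_vec n j) = (unit_vec n j :: complex vec)"
    by (rule eq_vecI, auto simp: unit_vec_def)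
  then show ?thesis unfolding quad_form_def using assms by simp
qed

definition unitary_mat :: "nat \<Rightarrow> complex mat \<Rightarrow> bool" where
  "unitary_mat n U \<longleftrightarrow> U \<in> carrier_mat n n \<and> mat_adjoint U * U = 1\<^sub>m n"

lemma unitary_mat_carrier: "unitary_mat n U \<Longrightarrow> U \<in> carrier_mat n n"
  unfolding unitary_mat_def by simp

lemma unitary_mat_adjoint_mult: "unitary_mat n U \<Longrightarrow> mat_adjoint U * U = 1\<^sub>m n"
  unfolding unitary_mat_def by simp

lemma unitary_mat_mult_adjoint: "unitary_mat n U \<Longrightarrow> U * mat_adjoint U = 1\<^sub>m n"
  unfolding unitary_mat_def using mat_mult_left_right_inverse[of "mat_adjoint U" n U] by auto

lemma unitary_mat_mult:
  assumes "unitary_mat n U" "unitary_mat n V"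
  shows "unitary_mat n (U * V)"
proof -
  have U: "U \<in> carrier_mat n n" and V: "V \<in> carrier_mat n n"
    using assms unitary_mat_carrier by auto
  have "mat_adjoint (U * V) * (U * V) = mat_adjoint V * (mat_adjoint U * (U * V))"
    by (subst mat_adjoint_mult[OF U V], rule assoc_mult_mat[of _ n n _ n _ n], use U V in auto)
  also have "mat_adjoint U * (U * V) = (mat_adjoint U * U) * V"
    using U V by (simp add: assoc_mult_mat[of _ n n _ n _ n])
  also have "mat_adjoint V * ((mat_adjoint U * U) * V) = 1\<^sub>m n"
    using unitary_mat_adjoint_mult[OF assms(1)] unitary_mat_adjoint_mult[OF assms(2)] V by simp
  finally show ?thesis unfolding unitary_mat_def using U V by simp
qed

lemma ex_unitary_mat_first_col:
  assumes v: "v \<in> carrier_vec n" and v1: "v \<bullet>c v = 1"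
  shows "\<exists>W. unitary_mat n W \<and> col W 0 = v"
proof -
  interpret cof_vec_space n "TYPE(complex)" .
  have v0: "v \<noteq> 0\<^sub>v n" using v1 v by auto
  have n: "0 < n" using v v0 by (auto intro!: eq_vecI)
  define b where "b = basis_completion v"
  define ws where "ws = gram_schmidt n b"
  from basis_completion[OF v v0, folded b_def]
  have dist_b: "distinct b" and indep: "\<not> lin_dep (set b)" and b: "set b \<subseteq> carrier_vec n"
    and hdb: "hd b = v" and len_b: "length b = n" by auto
  from hdb len_b n obtain vs where bv: "b = v # vs" by (cases b, auto)
  from gram_schmidt_result[OF b dist_b indep refl, folded ws_def]
  have ws: "set ws \<subseteq> carrier_vec n" "corthogonal ws" "length ws = n"
    by (auto simp: len_b)
  from gram_schmidt_hd[OF v, of vs, folded bv] have "hd ws = v" unfolding ws_def .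
  then have ws0: "ws ! 0 = v" using ws(3) n by (cases ws, auto)
  define nr where "nr = (\<lambda>w::complex vec. sqrt (Re (w \<bullet>c w)))"
  define us where "us = map (\<lambda>w. complex_of_real (1 / nr w) \<cdot>\<^sub>v w) ws"
  have wsc: "\<And>i. i < n \<Longrightarrow> ws ! i \<in> carrier_vec n" using ws by auto
  have orth: "us!i \<bullet>c us!j = (if i = j then 1 else 0)" if i: "i < n" and j: "j < n" for i j
  proof -
    have e: "us!i \<bullet>c us!j = complex_of_real (1 / nr (ws!i)) * cnj (complex_of_real (1 / nr (ws!j))) * (ws!i \<bullet>c ws!j)"
      unfolding us_def using i j ws(3) by (simp add: cscalar_prod_smult[OF wsc[OF i] wsc[OF j]])
    show ?thesis
    proof (cases "i = j")
      case True
      have "ws ! i \<bullet>c ws ! i \<noteq> 0" using ws(2,3) i corthogonalD by blast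
      then have "ws ! i \<noteq> 0\<^sub>v n" using wsc[OF i] by auto
      from cscalar_prod_self_real_pos[OF wsc[OF i] this]
      have r: "ws ! i \<bullet>c ws ! i = complex_of_real (Re (ws ! i \<bullet>c ws ! i))" "Re (ws ! i \<bullet>c ws ! i) > 0"
        by auto
      have "us!i \<bullet>c us!j = complex_of_real ((1 / nr (ws!i)) * (1 / nr (ws!i)) * Re (ws ! i \<bullet>c ws ! i))"
        using e True r(1) by (metis complex_cnj_complex_of_real of_real_mult)
      also have "(1 / nr (ws!i)) * (1 / nr (ws!i)) * Re (ws ! i \<bullet>c ws ! i) = 1"
        using r(2) unfolding nr_def by (simp add: field_simps)
      finally show ?thesis using True by simp
    next
      case False
      then show ?thesis using e ws(2,3) i j corthogonalD by auto
    qed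
  qed
  have "nr v = 1" unfolding nr_def using v1 by simp
  then have us0: "us ! 0 = v" unfolding us_def using ws0 ws(3) n by simp
  have us: "length us = n" "set us \<subseteq> carrier_vec n" unfolding us_def using ws by auto
  define W where "W = mat_of_cols n us"
  have W: "W \<in> carrier_mat n n" unfolding W_def using mat_of_cols_carrier(1)[of n us] us(1) by simp
  have usc: "\<And>i. i < n \<Longrightarrow> us ! i \<in> carrier_vec n" using us by auto
  have "mat_adjoint W * W = 1\<^sub>m n"
  proof (rule eq_matI)
    fix i j assume "i < dim_row (1\<^sub>m n :: complex mat)" "j < dim_col (1\<^sub>m n :: complex mat)"
    then have i: "i < n" and j: "j < n" by auto
    have "(mat_adjoint W * W) $$ (i,j) = (\<Sum>k<n. us ! j $ k * cnj (us ! i $ k))"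
      using index_mult_mat_sum[OF carrier_mat_adjoint[OF W] W i j] W i j us(1)
      by (simp add: W_def mat_of_cols_def mult.commute)
    also have "\<dots> = us ! j \<bullet>c us ! i" using usc[OF i] usc[OF j]
      by (simp add: scalar_prod_def atLeast0LessThan)
    also have "\<dots> = 1\<^sub>m n $$ (i,j)" using orth[OF j i] i j by simp
    finally show "(mat_adjoint W * W) $$ (i,j) = 1\<^sub>m n $$ (i,j)" .
  qed (use W in auto)
  moreover have "col W 0 = v"
    unfolding W_def using col_mat_of_cols[of 0 us n] us us0 usc[OF n] n by simp
  ultimately show ?thesis using W unfolding unitary_mat_def by blast
qed

section \<open>The spectral theorem for Hermitian matrices\<close>

definition real_diag_mat :: "nat \<Rightarrow> (nat \<Rightarrow> real) \<Rightarrow> complex mat" where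
  "real_diag_mat n d = mat n n (\<lambda>(i,j). if i = j then complex_of_real (d i) else 0)"

lemma real_diag_mat_carrier[simp]: "real_diag_mat n d \<in> carrier_mat n n"
  unfolding real_diag_mat_def by simp

lemma dim_real_diag_mat[simp]: "dim_row (real_diag_mat n d) = n" "dim_col (real_diag_mat n d) = n"
  unfolding real_diag_mat_def by simp_all

lemma mat_adjoint_real_diag_mat[simp]: "mat_adjoint (real_diag_mat n d) = real_diag_mat n d"
  by (rule eq_matI, auto simp: real_diag_mat_def)

lemma hermitian_real_diag_mat: "hermitian_mat n (real_diag_mat n d)"
  unfolding hermitian_mat_def by simp

lemma real_diag_mat_cong: "(\<And>i. i < n \<Longrightarrow> d i = e i) \<Longrightarrow> real_diag_mat n d = real_diag_mat n e"
  by (rule eq_matI, auto simp: real_diag_mat_def)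

lemma real_diag_mat_mult: "real_diag_mat n d * real_diag_mat n e = real_diag_mat n (\<lambda>i. d i * e i)"
proof (rule eq_matI)
  fix i j assume "i < dim_row (real_diag_mat n (\<lambda>i. d i * e i))" "j < dim_col (real_diag_mat n (\<lambda>i. d i * e i))"
  then have i: "i < n" and j: "j < n" by auto
  have "(real_diag_mat n d * real_diag_mat n e) $$ (i,j)
      = (\<Sum>k<n. if k = i then real_diag_mat n d $$ (i,k) * real_diag_mat n e $$ (k,j) else 0)"
    unfolding index_mult_mat_sum[OF real_diag_mat_carrier real_diag_mat_carrier i j]
    by (rule sum.cong, use i j in \<open>auto simp: real_diag_mat_def\<close>)
  also have "\<dots> = real_diag_mat n (\<lambda>i. d i * e i) $$ (i,j)"
    using i j by (simp add: real_diag_mat_def)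
  finally show "(real_diag_mat n d * real_diag_mat n e) $$ (i,j) = real_diag_mat n (\<lambda>i. d i * e i) $$ (i,j)" .
qed auto

lemma real_diag_mat_minus: "real_diag_mat n d - real_diag_mat n e = real_diag_mat n (\<lambda>i. d i - e i)"
  by (rule eq_matI, auto simp: real_diag_mat_def)

lemma real_diag_mat_linear:
  "real_diag_mat n (\<lambda>i. a * d i + b * e i) =
     complex_of_real a \<cdot>\<^sub>m real_diag_mat n d + complex_of_real b \<cdot>\<^sub>m real_diag_mat n e"
  by (rule eq_matI, auto simp: real_diag_mat_def)

lemma index_mult_real_diag_mat:
  assumes "U \<in> carrier_mat n n" "k < n" "i < n"
  shows "(U * real_diag_mat n d) $$ (k,i) = U $$ (k,i) * complex_of_real (d i)"
proof -
  have "(U * real_diag_mat n d) $$ (k,i) = (\<Sum>j<n. if j = i then U $$ (k,i) * complex_of_real (d i) else 0)"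
    unfolding index_mult_mat_sum[OF assms(1) real_diag_mat_carrier assms(2,3)]
    by (rule sum.cong, use assms in \<open>auto simp: real_diag_mat_def\<close>)
  then show ?thesis using assms by simp
qed

definition corner_block_mat :: "nat \<Rightarrow> complex \<Rightarrow> complex mat \<Rightarrow> complex mat" where
  "corner_block_mat m a M = mat (Suc m) (Suc m) (\<lambda>(i,j). if i = 0 \<and> j = 0 then a else
      if i = 0 \<or> j = 0 then 0 else M $$ (i - 1, j - 1))"

lemma corner_block_mat_carrier[simp]: "corner_block_mat m a M \<in> carrier_mat (Suc m) (Suc m)"
  unfolding corner_block_mat_def by simp

lemma corner_block_mat_mult:
  assumes X: "X \<in> carrier_mat m m" and Y: "Y \<in> carrier_mat m m"
  shows "corner_block_mat m a X * corner_block_mat m b Y = corner_block_mat m (a * b) (X * Y)"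
proof (rule eq_matI)
  fix i j assume "i < dim_row (corner_block_mat m (a * b) (X * Y))" "j < dim_col (corner_block_mat m (a * b) (X * Y))"
  then have i: "i < Suc m" and j: "j < Suc m" by (auto simp: corner_block_mat_def)
  have "(corner_block_mat m a X * corner_block_mat m b Y) $$ (i,j)
      = corner_block_mat m a X $$ (i,0) * corner_block_mat m b Y $$ (0,j)
        + (\<Sum>k<m. corner_block_mat m a X $$ (i,Suc k) * corner_block_mat m b Y $$ (Suc k,j))"
    unfolding index_mult_mat_sum[OF corner_block_mat_carrier corner_block_mat_carrier i j]
    by (simp only: sum.lessThan_Suc_shift)
  also have "\<dots> = corner_block_mat m (a * b) (X * Y) $$ (i,j)"
  proof (cases i)
    case 0
    then show ?thesis using j by (cases j, auto simp: corner_block_mat_def)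
  next
    case (Suc i')
    then show ?thesis using i j X Y
      by (cases j, auto simp: corner_block_mat_def scalar_prod_def atLeast0LessThan)
  qed
  finally show "(corner_block_mat m a X * corner_block_mat m b Y) $$ (i,j) = corner_block_mat m (a * b) (X * Y) $$ (i,j)" .
qed (auto simp: corner_block_mat_def)

lemma mat_adjoint_corner_block_mat:
  "X \<in> carrier_mat m m \<Longrightarrow> mat_adjoint (corner_block_mat m a X) = corner_block_mat m (cnj a) (mat_adjoint X)"
  by (rule eq_matI, auto simp: corner_block_mat_def)

lemma corner_block_mat_real_diag_mat:
  "corner_block_mat m (complex_of_real r) (real_diag_mat m d) = real_diag_mat (Suc m) (\<lambda>i. if i = 0 then r else d (i - 1))"
  by (rule eq_matI, auto simp: corner_block_mat_def real_diag_mat_def)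

lemma unitary_corner_block_mat: "unitary_mat m U \<Longrightarrow> unitary_mat (Suc m) (corner_block_mat m 1 U)"
proof -
  have "corner_block_mat m 1 (1\<^sub>m m) = 1\<^sub>m (Suc m)"
    by (rule eq_matI, auto simp: corner_block_mat_def)
  then show "unitary_mat m U \<Longrightarrow> unitary_mat (Suc m) (corner_block_mat m 1 U)"
    unfolding unitary_mat_def by (simp add: mat_adjoint_corner_block_mat corner_block_mat_mult)
qed

lemma hermitian_mat_adjoint_conj:
  assumes A: "hermitian_mat n A" and W: "W \<in> carrier_mat n m"
  shows "hermitian_mat m (mat_adjoint W * A * W)"
proof -
  have Ac: "A \<in> carrier_mat n n" and Aa: "mat_adjoint A = A"
    using A unfolding hermitian_mat_def by auto
  have "mat_adjoint (mat_adjoint W * A * W) = mat_adjoint W * mat_adjoint (mat_adjoint W * A)"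
    using Ac W by (intro mat_adjoint_mult[of _ m n]) auto
  also have "mat_adjoint (mat_adjoint W * A) = A * W"
    using mat_adjoint_mult[of "mat_adjoint W" m n A n] Ac W Aa by simp
  finally show ?thesis
    unfolding hermitian_mat_def using Ac W by (auto simp: assoc_mult_mat[of _ m n _ n _ m])
qed

lemma hermitian_mat_unit_eigenvector:
  assumes A: "hermitian_mat n A" and n: "0 < n"
  shows "\<exists>e v. v \<in> carrier_vec n \<and> v \<bullet>c v = 1 \<and> A *\<^sub>v v = complex_of_real e \<cdot>\<^sub>v v"
proof -
  have Ac: "A \<in> carrier_mat n n" using A unfolding hermitian_mat_def by simp
  obtain e where "e \<in> spectrum A" using spectrum_non_empty[OF Ac] n by auto
  then have "eigenvector A (find_eigenvector A e) e"
    using find_eigenvector[OF Ac] unfolding spectrum_def by simp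
  then obtain v0 where v0: "v0 \<in> carrier_vec n" "v0 \<noteq> 0\<^sub>v n" "A *\<^sub>v v0 = e \<cdot>\<^sub>v v0"
    unfolding eigenvector_def using Ac by auto
  define R where "R = Re (v0 \<bullet>c v0)"
  have R: "v0 \<bullet>c v0 = complex_of_real R" "R > 0"
    using cscalar_prod_self_real_pos[OF v0(1,2)] unfolding R_def by auto
  define v where "v = complex_of_real (1 / sqrt R) \<cdot>\<^sub>v v0"
  have v: "v \<in> carrier_vec n" unfolding v_def using v0 by simp
  have "v \<bullet>c v = complex_of_real ((1 / sqrt R) * (1 / sqrt R) * R)"
    unfolding v_def cscalar_prod_smult[OF v0(1) v0(1)] R(1)
    by (simp only: complex_cnj_complex_of_real of_real_mult)
  also have "(1 / sqrt R) * (1 / sqrt R) * R = 1" using R(2) by (simp add: field_simps)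
  finally have v1: "v \<bullet>c v = 1" by simp
  have Av: "A *\<^sub>v v = e \<cdot>\<^sub>v v"
    unfolding v_def using v0 Ac by (simp add: mult_mat_vec[OF Ac v0(1)] smult_smult_assoc mult.commute)
  \<comment> \<open>The eigenvalue is the (real) value of the quadratic form at the unit vector.\<close>
  have "quad_form A v = e" unfolding quad_form_def Av cscalar_prod_smult_left[OF v v] v1 by simp
  then have "e = complex_of_real (Re e)"
    using Im_quad_form_hermitian[OF A v] by (simp add: complex_eq_iff)
  then show ?thesis using v v1 Av by metis
qed

lemma hermitian_mat_deflation:
  assumes A: "hermitian_mat (Suc m) A" and W: "unitary_mat (Suc m) W"
    and Av: "A *\<^sub>v col W 0 = complex_of_real e \<cdot>\<^sub>v col W 0"
  shows "\<exists>A'. hermitian_mat m A' \<and> mat_adjoint W * A * W = corner_block_mat m (complex_of_real e) A'"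
proof -
  define n where "n = Suc m"
  have Ac: "A \<in> carrier_mat n n" using A unfolding hermitian_mat_def n_def by simp
  have Wc: "W \<in> carrier_mat n n" using W unitary_mat_carrier n_def by blast
  define B where "B = mat_adjoint W * A * W"
  have B: "hermitian_mat n B" unfolding B_def n_def using hermitian_mat_adjoint_conj[OF A] Wc n_def by simp
  then have Bh: "\<And>i j. i < n \<Longrightarrow> j < n \<Longrightarrow> B $$ (i,j) = cnj (B $$ (j,i))"
    unfolding hermitian_mat_iff by blast
  have col0: "B $$ (i,0) = (if i = 0 then complex_of_real e else 0)" if i: "i < n" for i
  proof -
    have "B = mat_adjoint W * (A * W)"
      unfolding B_def using Ac Wc by (simp add: assoc_mult_mat[of _ n n _ n _ n])
    then have "B $$ (i,0) = row (mat_adjoint W) i \<bullet> col (A * W) 0"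
      using Ac Wc i by (simp add: n_def)
    also have "col (A * W) 0 = A *\<^sub>v col W 0"
      by (rule col_mult2[OF Ac Wc]) (simp add: n_def)
    also have "\<dots> = complex_of_real e \<cdot>\<^sub>v col W 0"
      using Av by (simp add: n_def)
    also have "row (mat_adjoint W) i \<bullet> (complex_of_real e \<cdot>\<^sub>v col W 0)
        = complex_of_real e * (mat_adjoint W * W) $$ (i,0)"
      using Wc i by (simp add: n_def)
    finally show ?thesis using unitary_mat_adjoint_mult[OF W] i by (simp add: n_def)
  qed
  have row0: "B $$ (0,j) = (if j = 0 then complex_of_real e else 0)" if j: "j < n" for j
    using Bh[of 0 j] col0[OF j] j by (simp add: n_def)
  define A' where "A' = mat m m (\<lambda>(i,j). B $$ (Suc i, Suc j))"
  have "hermitian_mat m A'"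
    unfolding hermitian_mat_iff
  proof (intro conjI allI impI)
    fix i j assume "i < m" "j < m"
    then show "A' $$ (i,j) = cnj (A' $$ (j,i))" unfolding A'_def using Bh[of "Suc i" "Suc j"] by (simp add: n_def)
  qed (simp add: A'_def)
  moreover have "B = corner_block_mat m (complex_of_real e) A'"
  proof (rule eq_matI)
    fix i j assume "i < dim_row (corner_block_mat m (complex_of_real e) A')"
      "j < dim_col (corner_block_mat m (complex_of_real e) A')"
    then have i: "i < n" and j: "j < n" unfolding n_def corner_block_mat_def by auto
    show "B $$ (i,j) = corner_block_mat m (complex_of_real e) A' $$ (i,j)"
    proof (cases "i = 0")
      case True then show ?thesis using row0[OF j] i j unfolding corner_block_mat_def n_def by simp
    next
      case False
      then show ?thesis using col0 i j unfolding corner_block_mat_def A'_def n_def by (cases j, auto)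
    qed
  qed (use B in \<open>auto simp: n_def hermitian_mat_def corner_block_mat_def\<close>)
  ultimately show ?thesis unfolding B_def by blast
qed

theorem hermitian_mat_unitary_diagonalization:
  "hermitian_mat n A \<Longrightarrow> \<exists>U d. unitary_mat n U \<and> A = U * real_diag_mat n d * mat_adjoint U"
proof (induction n arbitrary: A)
  case 0
  then have "A = 1\<^sub>m 0 * real_diag_mat 0 (\<lambda>_. 0) * mat_adjoint (1\<^sub>m 0)"
    unfolding hermitian_mat_def by (intro eq_matI) auto
  moreover have "unitary_mat 0 (1\<^sub>m 0)" unfolding unitary_mat_def by simp
  ultimately show ?case by blast
next
  case (Suc m)
  define n where "n = Suc m"
  have Ac: "A \<in> carrier_mat n n" using Suc.prems unfolding hermitian_mat_def n_def by simp
  obtain e v where v: "v \<in> carrier_vec n" "v \<bullet>c v = 1" "A *\<^sub>v v = complex_of_real e \<cdot>\<^sub>v v"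
    using hermitian_mat_unit_eigenvector[OF Suc.prems] unfolding n_def by blast
  obtain W where W: "unitary_mat n W" "col W 0 = v" using ex_unitary_mat_first_col[OF v(1,2)] by blast
  have Wc: "W \<in> carrier_mat n n" using W unitary_mat_carrier by blast
  obtain A' where A': "hermitian_mat m A'" "mat_adjoint W * A * W = corner_block_mat m (complex_of_real e) A'"
    using hermitian_mat_deflation[OF Suc.prems] W v(3) unfolding n_def by blast
  obtain U' d' where U': "unitary_mat m U'" "A' = U' * real_diag_mat m d' * mat_adjoint U'"
    using Suc.IH[OF A'(1)] by blast
  have U'c: "U' \<in> carrier_mat m m" using U' unitary_mat_carrier by blast
  define V where "V = corner_block_mat m 1 U'"
  define d where "d = (\<lambda>i. if i = 0 then e else d' (i - 1))"
  have V: "unitary_mat n V" unfolding V_def n_def using unitary_corner_block_mat[OF U'(1)] .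
  have Vc: "V \<in> carrier_mat n n" using V unitary_mat_carrier by blast
  have "mat_adjoint W * A * W = corner_block_mat m (1 * complex_of_real e * 1) (U' * real_diag_mat m d' * mat_adjoint U')"
    using A' U'(2) by simp
  also have "\<dots> = V * real_diag_mat n d * mat_adjoint V"
    unfolding V_def d_def n_def using U'c
    by (simp add: corner_block_mat_mult mat_adjoint_corner_block_mat corner_block_mat_real_diag_mat[symmetric])
  finally have WAW: "mat_adjoint W * (A * W) = V * real_diag_mat n d * mat_adjoint V"
    using Wc Ac by (simp add: assoc_mult_mat[of _ n n _ n _ n])
  have "A = (W * mat_adjoint W) * A * (W * mat_adjoint W)"
    using unitary_mat_mult_adjoint[OF W(1)] Ac by simp
  also have "\<dots> = W * (mat_adjoint W * (A * W)) * mat_adjoint W"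
    using Wc Ac by (simp add: assoc_mult_mat[of _ n n _ n _ n])
  also have "\<dots> = (W * V) * real_diag_mat n d * mat_adjoint (W * V)"
    unfolding WAW using Wc Vc mat_adjoint_mult[OF Wc Vc] by (simp add: assoc_mult_mat[of _ n n _ n _ n])
  finally show ?case using unitary_mat_mult[OF W(1) V] unfolding n_def by blast
qed

section \<open>Jordan decomposition of a diagonalized Hermitian matrix\<close>

lemma quad_form_real_diag_mat:
  assumes w: "w \<in> carrier_vec n"
  shows "Re (quad_form (real_diag_mat n d) w) = (\<Sum>i<n. d i * ((Re (w $ i))\<^sup>2 + (Im (w $ i))\<^sup>2))"
proof -
  have "quad_form (real_diag_mat n d) w
      = (\<Sum>i<n. \<Sum>j<n. if j = i then complex_of_real (d i) * (w $ i * cnj (w $ i)) else 0)"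
    unfolding quad_form_sum[OF real_diag_mat_carrier w]
    by (rule sum.cong[OF refl], rule sum.cong[OF refl], auto simp: real_diag_mat_def)
  also have "\<dots> = (\<Sum>i<n. complex_of_real (d i * ((Re (w $ i))\<^sup>2 + (Im (w $ i))\<^sup>2)))"
    by (simp add: complex_mult_cnj)
  finally show ?thesis by (simp add: Re_sum)
qed

lemma hermitian_conj_real_diag_mat:
  assumes U: "U \<in> carrier_mat n n"
  shows "hermitian_mat n (U * real_diag_mat n d * mat_adjoint U)"
  using hermitian_mat_adjoint_conj[OF hermitian_real_diag_mat, of "mat_adjoint U" n] U by simp

lemma psd_conj_real_diag_mat:
  assumes U: "U \<in> carrier_mat n n" and d: "\<And>i. d i \<ge> 0"
  shows "psd_mat n (U * real_diag_mat n d * mat_adjoint U)"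
  unfolding psd_mat_iff
proof (intro conjI ballI hermitian_conj_real_diag_mat U)
  fix v :: "complex vec" assume v: "v \<in> carrier_vec n"
  have w: "mat_adjoint U *\<^sub>v v \<in> carrier_vec n" using U v by (meson mult_mat_vec_carrier carrier_mat_adjoint)
  have "(U * real_diag_mat n d * mat_adjoint U) *\<^sub>v v = U *\<^sub>v (real_diag_mat n d *\<^sub>v (mat_adjoint U *\<^sub>v v))"
    using U v by (simp add: assoc_mult_mat_vec[of _ n n _ n v] assoc_mult_mat[of _ n n _ n _ n])
  moreover have "real_diag_mat n d *\<^sub>v (mat_adjoint U *\<^sub>v v) \<in> carrier_vec n"
    using mult_mat_vec_carrier[OF real_diag_mat_carrier w] .
  ultimately have "quad_form (U * real_diag_mat n d * mat_adjoint U) v = quad_form (real_diag_mat n d) (mat_adjoint U *\<^sub>v v)"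
    unfolding quad_form_def using cscalar_prod_mat_adjoint[OF U _ v] by simp
  then show "0 \<le> Re (quad_form (U * real_diag_mat n d * mat_adjoint U) v)"
    using quad_form_real_diag_mat[OF w] d by (simp add: sum_nonneg)
qed

lemma psd_real_diag_mat: "(\<And>i. d i \<ge> 0) \<Longrightarrow> psd_mat n (real_diag_mat n d)"
  using psd_conj_real_diag_mat[of "1\<^sub>m n" n d] by simp

lemma mult_eq_mult_real_diag_mat_iff:
  assumes P: "P \<in> carrier_mat n n" and U: "U \<in> carrier_mat n n"
  shows "P * U = U * real_diag_mat n d \<longleftrightarrow> (\<forall>i<n. P *\<^sub>v col U i = complex_of_real (d i) \<cdot>\<^sub>v col U i)"
proof -
  have "(P * U) $$ (k,i) = (P *\<^sub>v col U i) $ k" "(U * real_diag_mat n d) $$ (k,i) = (complex_of_real (d i) \<cdot>\<^sub>v col U i) $ k"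
    if "k < n" "i < n" for k i
    using P U that index_mult_real_diag_mat[OF U that] by (auto simp: mult.commute)
  note entries = this
  show ?thesis
  proof
    assume "P * U = U * real_diag_mat n d"
    then show "\<forall>i<n. P *\<^sub>v col U i = complex_of_real (d i) \<cdot>\<^sub>v col U i"
      using entries P U by (auto simp: vec_eq_iff)
  next
    assume "\<forall>i<n. P *\<^sub>v col U i = complex_of_real (d i) \<cdot>\<^sub>v col U i"
    then show "P * U = U * real_diag_mat n d"
      using entries P U by (intro eq_matI) auto
  qed
qed

lemma unitary_conj_real_diag_mat_iff:
  assumes U: "unitary_mat n U" and P: "P \<in> carrier_mat n n"
  shows "P = U * real_diag_mat n d * mat_adjoint U \<longleftrightarrow> (\<forall>i<n. P *\<^sub>v col U i = complex_of_real (d i) \<cdot>\<^sub>v col U i)"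
proof -
  have Uc: "U \<in> carrier_mat n n" using U unitary_mat_carrier by blast
  have "P = U * real_diag_mat n d * mat_adjoint U \<longleftrightarrow> P * U = U * real_diag_mat n d"
  proof
    assume "P = U * real_diag_mat n d * mat_adjoint U"
    then have "P * U = U * real_diag_mat n d * (mat_adjoint U * U)"
      using Uc by (simp add: assoc_mult_mat[of _ n n _ n _ n])
    then show "P * U = U * real_diag_mat n d" using unitary_mat_adjoint_mult[OF U] Uc by simp
  next
    assume PU: "P * U = U * real_diag_mat n d"
    have "P = P * (U * mat_adjoint U)" using unitary_mat_mult_adjoint[OF U] P by simp
    also have "\<dots> = (P * U) * mat_adjoint U" using P Uc by (simp add: assoc_mult_mat[of _ n n _ n _ n])
    finally show "P = U * real_diag_mat n d * mat_adjoint U" unfolding PU .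
  qed
  then show ?thesis using mult_eq_mult_real_diag_mat_iff[OF P Uc] by simp
qed

lemma psd_mat_image_nonpos_eigenvector:
  assumes P: "psd_mat n P" and u: "u \<in> carrier_vec n"
    and eig: "P *\<^sub>v (P *\<^sub>v u) = complex_of_real l \<cdot>\<^sub>v (P *\<^sub>v u)" and l: "l \<le> 0"
  shows "P *\<^sub>v u = 0\<^sub>v n"
proof -
  have Pc: "P \<in> carrier_mat n n" and Pa: "mat_adjoint P = P" using psd_matD[OF P] by auto
  define x where "x = P *\<^sub>v u"
  have x: "x \<in> carrier_vec n" unfolding x_def using Pc u by simp
  have "x \<bullet>c x = x \<bullet>c (mat_adjoint P *\<^sub>v u)" unfolding Pa x_def ..
  also have "\<dots> = (P *\<^sub>v x) \<bullet>c u" using cscalar_prod_mat_adjoint[OF Pc x u] by simp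
  also have "\<dots> = complex_of_real l * quad_form P u"
    unfolding x_def eig cscalar_prod_smult_left[OF x[unfolded x_def] u] quad_form_def ..
  finally have "Re (x \<bullet>c x) = l * Re (quad_form P u)" by simp
  also have "\<dots> \<le> 0" using P u l unfolding psd_mat_iff by (simp add: mult_nonpos_nonneg)
  finally show ?thesis using cscalar_prod_self_nonpos_imp_zero[OF x] unfolding x_def by blast
qed

lemma jordan_pair_eigenvector:
  assumes P: "psd_mat n P" and N: "psd_mat n N" and PN: "P * N = 0\<^sub>m n n"
    and u: "u \<in> carrier_vec n" and Au: "(P - N) *\<^sub>v u = complex_of_real l \<cdot>\<^sub>v u"
  shows "P *\<^sub>v u = complex_of_real (max l 0) \<cdot>\<^sub>v u \<and> N *\<^sub>v u = complex_of_real (max (-l) 0) \<cdot>\<^sub>v u"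
proof -
  have Pc: "P \<in> carrier_mat n n" and Pa: "mat_adjoint P = P" using psd_matD[OF P] by auto
  have Nc: "N \<in> carrier_mat n n" and Na: "mat_adjoint N = N" using psd_matD[OF N] by auto
  have NP: "N * P = 0\<^sub>m n n" using mat_adjoint_mult[OF Pc Nc] PN Pa Na by simp
  define x where "x = P *\<^sub>v u"
  define y where "y = N *\<^sub>v u"
  have x: "x \<in> carrier_vec n" and y: "y \<in> carrier_vec n" unfolding x_def y_def using Pc Nc u by auto
  have xy: "x - y = complex_of_real l \<cdot>\<^sub>v u"
    unfolding x_def y_def using Au Pc Nc u by (simp add: minus_mult_distrib_mat_vec)
  have "P *\<^sub>v y = 0\<^sub>v n" "N *\<^sub>v x = 0\<^sub>v n"
    unfolding x_def y_def using PN NP Pc Nc u by (auto simp flip: assoc_mult_mat_vec)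
  then have "P *\<^sub>v x = P *\<^sub>v (x - y)" "N *\<^sub>v y = - (N *\<^sub>v (x - y))"
    using Pc Nc x y by (auto simp: mult_minus_distrib_mat_vec)
  moreover have "P *\<^sub>v (x - y) = complex_of_real l \<cdot>\<^sub>v x" "N *\<^sub>v (x - y) = complex_of_real l \<cdot>\<^sub>v y"
    unfolding xy unfolding x_def y_def using mult_mat_vec Pc Nc u by blast+
  ultimately have Px: "P *\<^sub>v x = complex_of_real l \<cdot>\<^sub>v x" and Ny: "N *\<^sub>v y = complex_of_real (- l) \<cdot>\<^sub>v y"
    using y by (auto intro!: eq_vecI)
  show ?thesis
  proof (cases "l \<ge> 0")
    case True
    have "y = 0\<^sub>v n" using psd_mat_image_nonpos_eigenvector[OF N u Ny[unfolded y_def]] True unfolding y_def by simp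
    moreover from this have "x = complex_of_real l \<cdot>\<^sub>v u" using xy x by auto
    ultimately show ?thesis using True u unfolding x_def y_def by auto
  next
    case False
    have "x = 0\<^sub>v n" using psd_mat_image_nonpos_eigenvector[OF P u Px[unfolded x_def]] False unfolding x_def by simp
    moreover have "y = complex_of_real (- l) \<cdot>\<^sub>v u"
    proof (rule eq_vecI)
      fix i assume "i < dim_vec (complex_of_real (- l) \<cdot>\<^sub>v u)"
      then have i: "i < n" using u by simp
      have "(x - y) $ i = (complex_of_real l \<cdot>\<^sub>v u) $ i" using xy by simp
      then show "y $ i = (complex_of_real (- l) \<cdot>\<^sub>v u) $ i" using \<open>x = 0\<^sub>v n\<close> y u i by (simp, metis minus_minus)
    qed (use y u in simp)
    ultimately show ?thesis using False u unfolding x_def y_def by auto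
  qed
qed

lemma jordan_pair_eq_unitary_conj_real_diag_mat:
  assumes U: "unitary_mat n U" and A: "A = U * real_diag_mat n d * mat_adjoint U"
    and P: "psd_mat n P" and N: "psd_mat n N" and APN: "A = P - N" and PN: "P * N = 0\<^sub>m n n"
  shows "P = U * real_diag_mat n (\<lambda>i. max (d i) 0) * mat_adjoint U
    \<and> N = U * real_diag_mat n (\<lambda>i. max (- d i) 0) * mat_adjoint U"
proof -
  have Uc: "U \<in> carrier_mat n n" using U unitary_mat_carrier by blast
  have "(P - N) *\<^sub>v col U i = complex_of_real (d i) \<cdot>\<^sub>v col U i" if "i < n" for i
    using unitary_conj_real_diag_mat_iff[OF U, of A d] A Uc that unfolding APN by auto
  then have "P *\<^sub>v col U i = complex_of_real (max (d i) 0) \<cdot>\<^sub>v col U i \<and>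
      N *\<^sub>v col U i = complex_of_real (max (- d i) 0) \<cdot>\<^sub>v col U i" if "i < n" for i
    using jordan_pair_eigenvector[OF P N PN, of "col U i"] Uc that by simp
  then show ?thesis
    using unitary_conj_real_diag_mat_iff[OF U] psd_matD[OF P] psd_matD[OF N] by blast
qed

lemma jordan_parts_unitary_conj_real_diag_mat:
  assumes U: "unitary_mat n U" and A: "A = U * real_diag_mat n d * mat_adjoint U"
  shows "pos_part A = U * real_diag_mat n (\<lambda>i. max (d i) 0) * mat_adjoint U"
    and "neg_part A = U * real_diag_mat n (\<lambda>i. max (- d i) 0) * mat_adjoint U"
proof -
  define P0 where "P0 = U * real_diag_mat n (\<lambda>i. max (d i) 0) * mat_adjoint U"
  define N0 where "N0 = U * real_diag_mat n (\<lambda>i. max (- d i) 0) * mat_adjoint U"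
  have Uc: "U \<in> carrier_mat n n" using U unitary_mat_carrier by blast
  have dA: "dim_row A = n" unfolding A using Uc by simp
  have P0: "psd_mat n P0" unfolding P0_def by (rule psd_conj_real_diag_mat[OF Uc], simp)
  have N0: "psd_mat n N0" unfolding N0_def by (rule psd_conj_real_diag_mat[OF Uc], simp)
  have "P0 - N0 = U * (real_diag_mat n (\<lambda>i. max (d i) 0) - real_diag_mat n (\<lambda>i. max (- d i) 0)) * mat_adjoint U"
    unfolding P0_def N0_def using Uc
    by (simp add: minus_mult_distrib_mat[of _ n n _ _ n] mult_minus_distrib_mat[of _ n n _ n])
  also have "real_diag_mat n (\<lambda>i. max (d i) 0) - real_diag_mat n (\<lambda>i. max (- d i) 0) = real_diag_mat n d"
    unfolding real_diag_mat_minus by (rule real_diag_mat_cong) auto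
  finally have AP0N0: "A = P0 - N0" unfolding A ..
  have "P0 * N0 = U * (real_diag_mat n (\<lambda>i. max (d i) 0) * (mat_adjoint U * U) * real_diag_mat n (\<lambda>i. max (- d i) 0)) * mat_adjoint U"
    unfolding P0_def N0_def using Uc by (simp add: assoc_mult_mat[of _ n n _ n _ n])
  also have "real_diag_mat n (\<lambda>i. max (d i) 0) * (mat_adjoint U * U) * real_diag_mat n (\<lambda>i. max (- d i) 0)
      = real_diag_mat n (\<lambda>i. max (d i) 0 * max (- d i) 0)"
    unfolding unitary_mat_adjoint_mult[OF U] by (simp add: real_diag_mat_mult)
  also have "\<dots> = 0\<^sub>m n n" by (rule eq_matI) (auto simp: real_diag_mat_def)
  finally have P0N0: "P0 * N0 = 0\<^sub>m n n" using Uc by simp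
  have "jordan_parts A = (P0, N0)" unfolding jordan_parts_def dA
  proof (rule the_equality)
    show "case (P0, N0) of (P, N) \<Rightarrow> psd_mat n P \<and> psd_mat n N \<and> A = P - N \<and> P * N = 0\<^sub>m n n"
      using P0 N0 AP0N0 P0N0 by simp
    fix x assume x: "case x of (P, N) \<Rightarrow> psd_mat n P \<and> psd_mat n N \<and> A = P - N \<and> P * N = 0\<^sub>m n n"
    obtain P N where xPN: "x = (P, N)" by (cases x)
    with x have "psd_mat n P" "psd_mat n N" "A = P - N" "P * N = 0\<^sub>m n n" by simp_all
    from jordan_pair_eq_unitary_conj_real_diag_mat[OF U A this]
    show "x = (P0, N0)" unfolding xPN P0_def N0_def by (simp only: prod.inject)
  qed
  then show "pos_part A = P0" "neg_part A = N0" unfolding pos_part_def neg_part_def by simp_all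
qed

section \<open>Trace norm of a positive combination of orthogonal projections\<close>

lemma order_linear_factor: "order z [:-x, 1:] = (if z = x then 1 else (0::nat))" for x z :: complex
proof (cases "z = x")
  case True
  then show ?thesis using order_power_n_n[of x 1] by simp
next
  case False
  then show ?thesis by (simp add: order_0I)
qed

lemma prod_linear_factors_nonzero: "(\<Prod>a\<leftarrow>xs. [:-a, 1:]) \<noteq> (0 :: complex poly)"
proof (induct xs)
  case (Cons a xs)
  then show ?case by (simp only: list.map prod_list.Cons mult_eq_0_iff) simp
qed simp

lemma poly_prod_linear_factors_eq_0_iff: "poly (\<Prod>a\<leftarrow>xs. [:-a, 1:]) z = 0 \<longleftrightarrow> (z::complex) \<in> set xs"
proof (induct xs)
  case (Cons a xs)
  then show ?case by (simp only: list.map prod_list.Cons poly_mult mult_eq_0_iff) auto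
qed simp

lemma sum_order_prod_linear_factors:
  assumes "finite S" "set xs \<subseteq> S"
  shows "(\<Sum>z\<in>S. real (order z (\<Prod>a\<leftarrow>xs. [:-a, 1:])) * f z) = sum_list (map f (xs :: complex list))"
  using assms(2)
proof (induct xs)
  case Nil
  have "\<And>z. order z (1 :: complex poly) = 0" by (intro order_0I) simp
  then show ?case by simp
next
  case (Cons x xs)
  have nz: "[:-x, 1:] * (\<Prod>a\<leftarrow>xs. [:-a, 1:]) \<noteq> (0 :: complex poly)"
    using prod_linear_factors_nonzero[of "x # xs"] by simp
  have o: "\<And>z. order z (\<Prod>a\<leftarrow>x # xs. [:-a, 1:]) = (if z = x then 1 else 0) + order z (\<Prod>a\<leftarrow>xs. [:-a, 1:])"
    by (simp only: list.map prod_list.Cons order_mult[OF nz] order_linear_factor)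
  have "(\<Sum>z\<in>S. real (order z (\<Prod>a\<leftarrow>x # xs. [:-a, 1:])) * f z)
      = (\<Sum>z\<in>S. (if z = x then f z else 0) + real (order z (\<Prod>a\<leftarrow>xs. [:-a, 1:])) * f z)"
    by (rule sum.cong[OF refl], simp only: o, simp add: distrib_right)
  also have "\<dots> = f x + sum_list (map f xs)"
    using Cons assms(1) by (simp add: sum.distrib)
  finally show ?case by simp
qed

lemma char_poly_unitary_conj_real_diag_mat:
  assumes U: "unitary_mat n U"
  shows "char_poly (U * real_diag_mat n e * mat_adjoint U) = (\<Prod>a\<leftarrow>map (\<lambda>i. complex_of_real (e i)) [0..<n]. [:-a, 1:])"
proof -
  have Uc: "U \<in> carrier_mat n n" using U unitary_mat_carrier by blast
  have "similar_mat (U * real_diag_mat n e * mat_adjoint U) (real_diag_mat n e)"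
    unfolding similar_mat_def similar_mat_wit_def Let_def
    using Uc unitary_mat_adjoint_mult[OF U] unitary_mat_mult_adjoint[OF U]
    by (intro exI[of _ U] exI[of _ "mat_adjoint U"]) simp
  then have "char_poly (U * real_diag_mat n e * mat_adjoint U) = char_poly (real_diag_mat n e)"
    by (rule char_poly_similar)
  also have "\<dots> = (\<Prod>a\<leftarrow>diag_mat (real_diag_mat n e). [:-a, 1:])"
    by (rule char_poly_upper_triangular[OF real_diag_mat_carrier])
      (auto simp: upper_triangular_def real_diag_mat_def)
  also have "diag_mat (real_diag_mat n e) = map (\<lambda>i. complex_of_real (e i)) [0..<n]"
    unfolding diag_mat_def by (simp add: real_diag_mat_def)
  finally show ?thesis .
qed

lemma trace_norm_unitary_conj_real_diag_mat:
  assumes U: "unitary_mat n U" and c: "\<And>i. c i \<ge> 0"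
  shows "trace_norm (U * real_diag_mat n c * mat_adjoint U) = (\<Sum>i<n. c i)"
proof -
  have Uc: "U \<in> carrier_mat n n" using U unitary_mat_carrier by blast
  define X where "X = U * real_diag_mat n c * mat_adjoint U"
  have "mat_adjoint X = X" using hermitian_conj_real_diag_mat[OF Uc] unfolding X_def hermitian_mat_def by simp
  moreover have "X * X = U * (real_diag_mat n c * (mat_adjoint U * U) * real_diag_mat n c) * mat_adjoint U"
    unfolding X_def using Uc by (simp add: assoc_mult_mat[of _ n n _ n _ n])
  ultimately have XX: "mat_adjoint X * X = U * real_diag_mat n (\<lambda>i. c i * c i) * mat_adjoint U"
    unfolding unitary_mat_adjoint_mult[OF U] by (simp add: real_diag_mat_mult)
  define xs where "xs = map (\<lambda>i. complex_of_real (c i * c i)) [0..<n]"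
  define p where "p = (\<Prod>a\<leftarrow>xs. [:-a, 1:])"
  have "char_poly (mat_adjoint X * X) = p"
    unfolding XX p_def xs_def by (rule char_poly_unitary_conj_real_diag_mat[OF U])
  moreover have "{z. poly p z = 0} = set xs"
    unfolding p_def using poly_prod_linear_factors_eq_0_iff by blast
  ultimately have "trace_norm X = (\<Sum>z\<in>set xs. real (order z p) * sqrt (Re z))"
    unfolding trace_norm_def Let_def by simp
  also have "\<dots> = sum_list (map (\<lambda>z. sqrt (Re z)) xs)"
    unfolding p_def by (rule sum_order_prod_linear_factors) auto
  also have "\<dots> = (\<Sum>i<n. c i)" unfolding xs_def
    by (simp add: sum_list_distinct_conv_sum_set atLeast0LessThan c real_sqrt_mult)
  finally show ?thesis unfolding X_def .
qed

section \<open>Compressions and the two PTP maps\<close>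

lemma mtrace_mult_comm:
  assumes A: "A \<in> carrier_mat n m" and B: "B \<in> carrier_mat m n"
  shows "mtrace (A * B) = mtrace (B * A)"
proof -
  have "mtrace (A * B) = (\<Sum>i<n. \<Sum>k<m. A $$ (i,k) * B $$ (k,i))"
    unfolding mtrace_def using A B by (simp add: scalar_prod_def atLeast0LessThan)
  also have "\<dots> = (\<Sum>k<m. \<Sum>i<n. B $$ (k,i) * A $$ (i,k))"
    by (subst sum.swap) (simp add: mult.commute)
  also have "\<dots> = mtrace (B * A)"
    unfolding mtrace_def using A B by (simp add: scalar_prod_def atLeast0LessThan)
  finally show ?thesis .
qed

lemma mtrace_unitary_conj:
  assumes U: "unitary_mat n U" and X: "X \<in> carrier_mat n n"
  shows "mtrace (U * X * mat_adjoint U) = mtrace X"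
proof -
  have Uc: "U \<in> carrier_mat n n" using U unitary_mat_carrier by blast
  have "mtrace (U * X * mat_adjoint U) = mtrace (mat_adjoint U * (U * X))"
    by (rule mtrace_mult_comm[of _ n n], use Uc X in simp_all)
  also have "\<dots> = mtrace X"
    using unitary_mat_adjoint_mult[OF U] Uc X by (simp add: assoc_mult_mat[of _ n n _ n _ n, symmetric])
  finally show ?thesis .
qed

lemma mtrace_real_diag_mat: "mtrace (real_diag_mat n e) = complex_of_real (\<Sum>i<n. e i)"
  unfolding mtrace_def by (simp add: real_diag_mat_def)

definition compressed_trace :: "complex mat \<Rightarrow> nat set \<Rightarrow> complex mat \<Rightarrow> complex" where
  "compressed_trace U S X = (\<Sum>i\<in>S. (mat_adjoint U * X * U) $$ (i,i))"

lemma diag_entry_adjoint_conj: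
  assumes U: "U \<in> carrier_mat n n" and X: "X \<in> carrier_mat n n" and i: "i < n"
  shows "(mat_adjoint U * X * U) $$ (i,i) = quad_form X (col U i)"
proof -
  have "(mat_adjoint U * X * U) $$ (i,i) = (mat_adjoint U * (X * U)) $$ (i,i)"
    using U X by (simp add: assoc_mult_mat[of _ n n _ n _ n])
  also have "\<dots> = (\<Sum>k<n. mat_adjoint U $$ (i,k) * (X * U) $$ (k,i))"
    by (rule index_mult_mat_sum[OF carrier_mat_adjoint[OF U] _ i i], use U X in simp)
  also have "\<dots> = (\<Sum>k<n. (X *\<^sub>v col U i) $ k * cnj (col U i $ k))"
    using U X i by (intro sum.cong refl) (simp add: mult.commute)
  also have "\<dots> = quad_form X (col U i)" unfolding quad_form_def using U X i
    by (simp add: scalar_prod_def atLeast0LessThan)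
  finally show ?thesis .
qed

lemma compressed_trace_linear:
  assumes U: "U \<in> carrier_mat n n" and S: "S \<subseteq> {..<n}"
    and X: "X \<in> carrier_mat n n" and Y: "Y \<in> carrier_mat n n"
  shows "compressed_trace U S (a \<cdot>\<^sub>m X + b \<cdot>\<^sub>m Y) = a * compressed_trace U S X + b * compressed_trace U S Y"
proof -
  have "quad_form (a \<cdot>\<^sub>m X + b \<cdot>\<^sub>m Y) v = a * quad_form X v + b * quad_form Y v" if "v \<in> carrier_vec n" for v
    using X Y that by (simp add: quad_form_sum[of _ n] sum.distrib sum_distrib_left algebra_simps)
  note lin = this
  have XY: "a \<cdot>\<^sub>m X + b \<cdot>\<^sub>m Y \<in> carrier_mat n n" using X Y by simp
  have "(mat_adjoint U * (a \<cdot>\<^sub>m X + b \<cdot>\<^sub>m Y) * U) $$ (i,i)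
      = a * (mat_adjoint U * X * U) $$ (i,i) + b * (mat_adjoint U * Y * U) $$ (i,i)" if "i \<in> S" for i
  proof -
    have i: "i < n" using S that by auto
    show ?thesis
      unfolding diag_entry_adjoint_conj[OF U XY i] diag_entry_adjoint_conj[OF U X i] diag_entry_adjoint_conj[OF U Y i]
      using lin U i by simp
  qed
  then show ?thesis unfolding compressed_trace_def by (simp add: sum.distrib sum_distrib_left)
qed

lemma Re_compressed_trace_psd:
  assumes U: "U \<in> carrier_mat n n" and S: "S \<subseteq> {..<n}" and X: "psd_mat n X"
  shows "Re (compressed_trace U S X) \<ge> 0"
proof -
  have Xc: "X \<in> carrier_mat n n" using psd_matD[OF X] by simp
  have "Re (compressed_trace U S X) = (\<Sum>i\<in>S. Re (quad_form X (col U i)))"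
    unfolding compressed_trace_def Re_sum using S diag_entry_adjoint_conj[OF U Xc] by (intro sum.cong refl) auto
  also have "\<dots> \<ge> 0" using X S U unfolding psd_mat_iff by (intro sum_nonneg) auto
  finally show ?thesis by simp
qed

lemma Im_compressed_trace_hermitian:
  assumes U: "U \<in> carrier_mat n n" and S: "S \<subseteq> {..<n}" and X: "hermitian_mat n X"
  shows "Im (compressed_trace U S X) = 0"
proof -
  have Xc: "X \<in> carrier_mat n n" using X unfolding hermitian_mat_def by simp
  have "Im (compressed_trace U S X) = (\<Sum>i\<in>S. Im (quad_form X (col U i)))"
    unfolding compressed_trace_def Im_sum using S diag_entry_adjoint_conj[OF U Xc] by (intro sum.cong refl) auto
  also have "\<dots> = 0" using S U Im_quad_form_hermitian[OF X] by (intro sum.neutral) auto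
  finally show ?thesis .
qed

lemma compressed_trace_add_complement:
  assumes U: "unitary_mat n U" and S: "S \<subseteq> {..<n}" and X: "X \<in> carrier_mat n n"
  shows "compressed_trace U S X + compressed_trace U ({..<n} - S) X = mtrace X"
proof -
  have Uc: "U \<in> carrier_mat n n" using U unitary_mat_carrier by blast
  have "compressed_trace U S X + compressed_trace U ({..<n} - S) X = (\<Sum>i<n. (mat_adjoint U * X * U) $$ (i,i))"
    unfolding compressed_trace_def sum.subset_diff[OF S finite_lessThan, of "\<lambda>i. (mat_adjoint U * X * U) $$ (i,i)"]
    by (rule add.commute)
  also have "\<dots> = mtrace (mat_adjoint U * X * U)" unfolding mtrace_def using Uc X by simp
  also have "\<dots> = mtrace (mat_adjoint U * (X * U))"
    using Uc X by (simp add: assoc_mult_mat[of _ n n _ n _ n])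
  also have "\<dots> = mtrace ((X * U) * mat_adjoint U)"
    by (rule mtrace_mult_comm[of _ n n], use Uc X in simp_all)
  also have "\<dots> = mtrace X"
    using unitary_mat_mult_adjoint[OF U] Uc X by (simp add: assoc_mult_mat[of _ n n _ n _ n])
  finally show ?thesis .
qed

lemma compressed_trace_unitary_conj_real_diag_mat:
  assumes U: "unitary_mat n U" and S: "S \<subseteq> {..<n}"
  shows "compressed_trace U S (U * real_diag_mat n d * mat_adjoint U) = complex_of_real (\<Sum>i\<in>S. d i)"
proof -
  have Uc: "U \<in> carrier_mat n n" using U unitary_mat_carrier by blast
  have "mat_adjoint U * (U * real_diag_mat n d * mat_adjoint U) * U
      = (mat_adjoint U * U) * real_diag_mat n d * (mat_adjoint U * U)"
    using Uc by (simp add: assoc_mult_mat[of _ n n _ n _ n])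
  then have "mat_adjoint U * (U * real_diag_mat n d * mat_adjoint U) * U = real_diag_mat n d"
    unfolding unitary_mat_adjoint_mult[OF U] by simp
  then show ?thesis
    unfolding compressed_trace_def using S by (simp add: subset_eq real_diag_mat_def)
qed

lemma hermitian_mat_diag_real:
  assumes "hermitian_mat n A" "i < n"
  shows "A $$ (i,i) = complex_of_real (Re (A $$ (i,i)))"
proof -
  have "A $$ (i,i) = cnj (A $$ (i,i))" using assms unfolding hermitian_mat_iff by blast
  then have "Im (A $$ (i,i)) = Im (cnj (A $$ (i,i)))" by (rule arg_cong)
  then have "Im (A $$ (i,i)) = 0" by simp
  then show ?thesis by (simp add: complex_eq_iff)
qed

definition pos_neg_mat :: "real \<Rightarrow> real \<Rightarrow> complex mat" where
  "pos_neg_mat a b = real_diag_mat 2 (\<lambda>j. if j = 0 then a else - b)"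

lemma mtrace_two: "A \<in> carrier_mat 2 2 \<Longrightarrow> mtrace A = A $$ (0,0) + A $$ (1,1)"
  unfolding mtrace_def by (simp add: numeral_2_eq_2 lessThan_Suc)

lemma ptp_map_pinching:
  assumes U: "unitary_mat n U" and S: "S \<subseteq> {..<n}"
  shows "ptp_map n 2 (\<lambda>X. real_diag_mat 2 (\<lambda>j. if j = 0 then Re (compressed_trace U S X)
                                              else Re (compressed_trace U ({..<n} - S) X)))"
    (is "ptp_map n 2 ?\<Phi>")
proof -
  have Uc: "U \<in> carrier_mat n n" using U unitary_mat_carrier by blast
  let ?T = "{..<n} - S"
  have T: "?T \<subseteq> {..<n}" by blast
  show ?thesis unfolding ptp_map_def
  proof (intro conjI allI impI)
    fix X show "hermitian_mat 2 (?\<Phi> X)" by (rule hermitian_real_diag_mat)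
  next
    fix X Y :: "complex mat" and a b :: real
    assume "hermitian_mat n X" "hermitian_mat n Y"
    then have X: "X \<in> carrier_mat n n" and Y: "Y \<in> carrier_mat n n" unfolding hermitian_mat_def by auto
    have "?\<Phi> (complex_of_real a \<cdot>\<^sub>m X + complex_of_real b \<cdot>\<^sub>m Y)
        = real_diag_mat 2 (\<lambda>j. a * (if j = 0 then Re (compressed_trace U S X) else Re (compressed_trace U ?T X))
                                + b * (if j = 0 then Re (compressed_trace U S Y) else Re (compressed_trace U ?T Y)))"
      unfolding compressed_trace_linear[OF Uc S X Y] compressed_trace_linear[OF Uc T X Y]
      by (rule real_diag_mat_cong) auto
    then show "?\<Phi> (complex_of_real a \<cdot>\<^sub>m X + complex_of_real b \<cdot>\<^sub>m Y) = complex_of_real a \<cdot>\<^sub>m ?\<Phi> X + complex_of_real b \<cdot>\<^sub>m ?\<Phi> Y"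
      unfolding real_diag_mat_linear .
  next
    fix X assume X: "psd_mat n X"
    show "psd_mat 2 (?\<Phi> X)"
      using Re_compressed_trace_psd[OF Uc S X] Re_compressed_trace_psd[OF Uc T X] by (intro psd_real_diag_mat) auto
  next
    fix X assume X: "hermitian_mat n X"
    have Xc: "X \<in> carrier_mat n n" using X unfolding hermitian_mat_def by auto
    have "mtrace (?\<Phi> X) = complex_of_real (Re (compressed_trace U S X)) + complex_of_real (Re (compressed_trace U ?T X))"
      by (simp add: mtrace_two real_diag_mat_def)
    also have "\<dots> = compressed_trace U S X + compressed_trace U ?T X"
      using Im_compressed_trace_hermitian[OF Uc S X] Im_compressed_trace_hermitian[OF Uc T X]
      by (simp add: complex_eq_iff)
    also have "\<dots> = mtrace X" by (rule compressed_trace_add_complement[OF U S Xc])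
    finally show "mtrace (?\<Phi> X) = mtrace X" .
  qed
qed

lemma ex_ptp_map_to_pos_neg_mat:
  assumes U: "unitary_mat n U" and A: "A = U * real_diag_mat n d * mat_adjoint U"
  shows "\<exists>\<Phi>. ptp_map n 2 \<Phi> \<and> \<Phi> A = pos_neg_mat (\<Sum>i<n. max (d i) 0) (\<Sum>i<n. max (- d i) 0)"
proof -
  define S where "S = {i \<in> {..<n}. 0 < d i}"
  have S: "S \<subseteq> {..<n}" and T: "{..<n} - S \<subseteq> {..<n}" unfolding S_def by auto
  have "(\<Sum>i\<in>S. d i) = (\<Sum>i<n. if 0 < d i then d i else 0)"
    unfolding S_def by (rule sum.inter_filter) simp
  also have "\<dots> = (\<Sum>i<n. max (d i) 0)" by (intro sum.cong refl) auto
  finally have pos: "(\<Sum>i\<in>S. d i) = (\<Sum>i<n. max (d i) 0)" .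
  have "{..<n} - S = {i \<in> {..<n}. \<not> 0 < d i}" unfolding S_def by auto
  then have "(\<Sum>i\<in>{..<n} - S. d i) = (\<Sum>i<n. if \<not> 0 < d i then d i else 0)"
    by (simp only: sum.inter_filter finite_lessThan)
  also have "\<dots> = (\<Sum>i<n. - max (- d i) 0)" by (intro sum.cong refl) auto
  also have "\<dots> = - (\<Sum>i<n. max (- d i) 0)" by (simp add: sum_negf)
  finally have neg: "(\<Sum>i\<in>{..<n} - S. d i) = - (\<Sum>i<n. max (- d i) 0)" .
  have "Re (compressed_trace U S A) = (\<Sum>i<n. max (d i) 0)"
    "Re (compressed_trace U ({..<n} - S) A) = - (\<Sum>i<n. max (- d i) 0)"
    unfolding A compressed_trace_unitary_conj_real_diag_mat[OF U S]
      compressed_trace_unitary_conj_real_diag_mat[OF U T] pos neg by simp_all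
  then have "real_diag_mat 2 (\<lambda>j. if j = 0 then Re (compressed_trace U S A) else Re (compressed_trace U ({..<n} - S) A))
      = pos_neg_mat (\<Sum>i<n. max (d i) 0) (\<Sum>i<n. max (- d i) 0)"
    unfolding pos_neg_mat_def by (simp only:)
  then show ?thesis using ptp_map_pinching[OF U S] by blast
qed

lemma ex_probability_weights:
  fixes c :: "nat \<Rightarrow> real"
  assumes n: "0 < n" and c: "\<And>i. c i \<ge> 0"
  shows "\<exists>w. (\<forall>i. w i \<ge> 0) \<and> (\<Sum>i<n. w i) = 1 \<and> (\<forall>i<n. (\<Sum>j<n. c j) * w i = c i)"
proof (cases "(\<Sum>j<n. c j) = 0")
  case True
  then have "\<forall>i<n. c i = 0" using sum_nonneg_eq_0_iff[of "{..<n}" c] c by simp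
  then show ?thesis using n True by (intro exI[of _ "\<lambda>i. if i = 0 then 1 else 0"]) simp
next
  case False
  then have "(\<Sum>j<n. c j) > 0" using c by (simp add: order_less_le sum_nonneg)
  then show ?thesis using c
    by (intro exI[of _ "\<lambda>i. c i / (\<Sum>j<n. c j)"]) (simp add: sum_divide_distrib[symmetric])
qed

lemma conj_linear_combination:
  assumes "U \<in> carrier_mat n n" "M \<in> carrier_mat n n" "M' \<in> carrier_mat n n"
  shows "U * (a \<cdot>\<^sub>m M + b \<cdot>\<^sub>m M') * mat_adjoint U = a \<cdot>\<^sub>m (U * M * mat_adjoint U) + b \<cdot>\<^sub>m (U * M' * mat_adjoint U)"
proof -
  have "U * (a \<cdot>\<^sub>m M + b \<cdot>\<^sub>m M') = U * (a \<cdot>\<^sub>m M) + U * (b \<cdot>\<^sub>m M')"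
    by (rule mult_add_distrib_mat) (use assms in auto)
  also have "\<dots> = a \<cdot>\<^sub>m (U * M) + b \<cdot>\<^sub>m (U * M')"
    using assms by (simp add: mult_smult_distrib[of U n n _ n])
  finally have "U * (a \<cdot>\<^sub>m M + b \<cdot>\<^sub>m M') * mat_adjoint U = (a \<cdot>\<^sub>m (U * M) + b \<cdot>\<^sub>m (U * M')) * mat_adjoint U"
    by simp
  also have "\<dots> = (a \<cdot>\<^sub>m (U * M)) * mat_adjoint U + (b \<cdot>\<^sub>m (U * M')) * mat_adjoint U"
    by (rule add_mult_distrib_mat) (use assms in auto)
  also have "\<dots> = a \<cdot>\<^sub>m (U * M * mat_adjoint U) + b \<cdot>\<^sub>m (U * M' * mat_adjoint U)"
    using assms by (simp add: mult_smult_assoc_mat[of _ n n _ n])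
  finally show ?thesis .
qed

lemma ptp_map_unitary_mixture:
  assumes U: "unitary_mat n U"
    and p: "\<And>i. p i \<ge> 0" "(\<Sum>i<n. p i) = 1" and q: "\<And>i. q i \<ge> 0" "(\<Sum>i<n. q i) = 1"
  shows "ptp_map 2 n (\<lambda>Y. U * real_diag_mat n (\<lambda>i. Re (Y $$ (0,0)) * p i + Re (Y $$ (1,1)) * q i) * mat_adjoint U)"
    (is "ptp_map 2 n ?\<Psi>")
proof -
  have Uc: "U \<in> carrier_mat n n" using U unitary_mat_carrier by blast
  show ?thesis unfolding ptp_map_def
  proof (intro conjI allI impI)
    fix X show "hermitian_mat n (?\<Psi> X)" by (rule hermitian_conj_real_diag_mat[OF Uc])
  next
    fix X Y :: "complex mat" and a b :: real
    assume "hermitian_mat 2 X" "hermitian_mat 2 Y"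
    then have "X \<in> carrier_mat 2 2" "Y \<in> carrier_mat 2 2" unfolding hermitian_mat_def by auto
    then have "?\<Psi> (complex_of_real a \<cdot>\<^sub>m X + complex_of_real b \<cdot>\<^sub>m Y)
        = U * real_diag_mat n (\<lambda>i. a * (Re (X $$ (0,0)) * p i + Re (X $$ (1,1)) * q i)
                                   + b * (Re (Y $$ (0,0)) * p i + Re (Y $$ (1,1)) * q i)) * mat_adjoint U"
      by (simp add: algebra_simps)
    also have "\<dots> = complex_of_real a \<cdot>\<^sub>m ?\<Psi> X + complex_of_real b \<cdot>\<^sub>m ?\<Psi> Y"
      unfolding real_diag_mat_linear by (rule conj_linear_combination[OF Uc]) simp_all
    finally show "?\<Psi> (complex_of_real a \<cdot>\<^sub>m X + complex_of_real b \<cdot>\<^sub>m Y) = complex_of_real a \<cdot>\<^sub>m ?\<Psi> X + complex_of_real b \<cdot>\<^sub>m ?\<Psi> Y" .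
  next
    fix Y assume Y: "psd_mat 2 Y"
    then have "Re (quad_form Y (unit_vec 2 0)) \<ge> 0" "Re (quad_form Y (unit_vec 2 1)) \<ge> 0"
      unfolding psd_mat_iff by auto
    then have "Re (Y $$ (0,0)) \<ge> 0" "Re (Y $$ (1,1)) \<ge> 0"
      using quad_form_unit_vec psd_matD[OF Y] by auto
    then show "psd_mat n (?\<Psi> Y)" using p q by (intro psd_conj_real_diag_mat[OF Uc]) auto
  next
    fix Y assume Y: "hermitian_mat 2 Y"
    have "mtrace (?\<Psi> Y) = complex_of_real (\<Sum>i<n. Re (Y $$ (0,0)) * p i + Re (Y $$ (1,1)) * q i)"
      using mtrace_unitary_conj[OF U] mtrace_real_diag_mat by simp
    also have "\<dots> = complex_of_real (Re (Y $$ (0,0))) + complex_of_real (Re (Y $$ (1,1)))"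
      by (simp add: sum.distrib p(2) q(2) flip: sum_distrib_left)
    also have "\<dots> = mtrace Y"
      using Y hermitian_mat_diag_real[OF Y] unfolding hermitian_mat_def by (simp add: mtrace_two)
    finally show "mtrace (?\<Psi> Y) = mtrace Y" .
  qed
qed

lemma ex_ptp_map_from_pos_neg_mat:
  assumes n: "0 < n" and U: "unitary_mat n U" and A: "A = U * real_diag_mat n d * mat_adjoint U"
  shows "\<exists>\<Psi>. ptp_map 2 n \<Psi> \<and> \<Psi> (pos_neg_mat (\<Sum>i<n. max (d i) 0) (\<Sum>i<n. max (- d i) 0)) = A"
proof -
  obtain p where p: "\<And>i. p i \<ge> 0" "(\<Sum>i<n. p i) = 1" "\<And>i. i < n \<Longrightarrow> (\<Sum>j<n. max (d j) 0) * p i = max (d i) 0"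
    using ex_probability_weights[OF n, of "\<lambda>i. max (d i) 0"] by auto
  obtain q where q: "\<And>i. q i \<ge> 0" "(\<Sum>i<n. q i) = 1" "\<And>i. i < n \<Longrightarrow> (\<Sum>j<n. max (- d j) 0) * q i = max (- d i) 0"
    using ex_probability_weights[OF n, of "\<lambda>i. max (- d i) 0"] by auto
  have "real_diag_mat n (\<lambda>i. (\<Sum>j<n. max (d j) 0) * p i + (- (\<Sum>j<n. max (- d j) 0)) * q i) = real_diag_mat n d"
    using p(3) q(3) by (intro real_diag_mat_cong) (simp add: max_def)
  then show ?thesis
    using ptp_map_unitary_mixture[OF U p(1,2) q(1,2)] unfolding A
    by (intro exI[of _ "\<lambda>Y. U * real_diag_mat n (\<lambda>i. Re (Y $$ (0,0)) * p i + Re (Y $$ (1,1)) * q i) * mat_adjoint U"])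
      (simp add: pos_neg_mat_def real_diag_mat_def)
qed

lemma ptp_monotone_eq_pos_neg_mat:
  assumes \<mu>: "ptp_monotone \<mu>" and n: "0 < n" and A: "hermitian_mat n A"
  shows "\<mu> A = \<mu> (pos_neg_mat (trace_norm (pos_part A)) (trace_norm (neg_part A)))"
proof -
  obtain U d where U: "unitary_mat n U" and Ad: "A = U * real_diag_mat n d * mat_adjoint U"
    using hermitian_mat_unitary_diagonalization[OF A] by blast
  have "trace_norm (pos_part A) = (\<Sum>i<n. max (d i) 0)" "trace_norm (neg_part A) = (\<Sum>i<n. max (- d i) 0)"
    unfolding jordan_parts_unitary_conj_real_diag_mat[OF U Ad]
    by (simp_all add: trace_norm_unitary_conj_real_diag_mat[OF U])
  moreover obtain \<Phi> where "ptp_map n 2 \<Phi>" "\<Phi> A = pos_neg_mat (\<Sum>i<n. max (d i) 0) (\<Sum>i<n. max (- d i) 0)"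
    using ex_ptp_map_to_pos_neg_mat[OF U Ad] by blast
  moreover obtain \<Psi> where "ptp_map 2 n \<Psi>" "\<Psi> (pos_neg_mat (\<Sum>i<n. max (d i) 0) (\<Sum>i<n. max (- d i) 0)) = A"
    using ex_ptp_map_from_pos_neg_mat[OF n U Ad] by blast
  moreover have "hermitian_mat 2 (pos_neg_mat a b)" for a b
    unfolding pos_neg_mat_def by (rule hermitian_real_diag_mat)
  ultimately show ?thesis using \<mu> A n unfolding ptp_monotone_def
    by (metis order_antisym zero_less_numeral)
qed

theorem mainTheorem13:
  fixes \<mu> :: "complex mat \<Rightarrow> real" and A B :: "complex mat" and n k :: nat
  assumes "ptp_monotone \<mu>"
    and "0 < n" and "0 < k"
    and "hermitian_mat n A" and "hermitian_mat k B"
    and "trace_norm (pos_part A) = trace_norm (pos_part B)"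
    and "trace_norm (neg_part A) = trace_norm (neg_part B)"
  shows "\<mu> A = \<mu> B"
  using ptp_monotone_eq_pos_neg_mat[OF assms(1,2,4)] ptp_monotone_eq_pos_neg_mat[OF assms(1,3,5)] assms(6,7)
  by simp

end
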